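(* Let $S=(\mathcal{E},\Sigma,X,\mathcal{O})$ be an entity. Then $S$ is state determined (i.e. for $p,q\in\Sigma$, if $O(e,p)=O(e,q)$ for all $e\in\mathcal{E}$ then $p=q$) if and only if the state eigen closure operator $cl_{eig}$ on $\Sigma$ satisfies the $T_0$ separation axiom.
   Context: An entity $S=(\mathcal{E},\Sigma,X,\mathcal{O})$ consists of a set $\mathcal{E}$ (experiments), a set $\Sigma$ (states), and for each $e\in\mathcal{E}$, $p\in\Sigma$ a nonempty set $O(e,p)$, with $X=\bigcup_{e,p}O(e,p)$. Let $O(e)=\bigcup_{p\in\Sigma}O(e,p)$. For $e\in\mathcal{E}$ the eigen map $eig_e:\mathcal{P}(O(e))\to\mathcal{P}(\Sigma)$ is $p\in eig_e(A)\iff O(e,p)\subseteq A$, and $\mathcal{F}(e)=\{eig_e(A):A\subseteq O(e)\}$. The state eigen closure system $\mathcal{F}_{eig}$ is the set of all intersections $\bigcap_i A_i$ of families of elements $A_i\in\bigcup_{e\in\mathcal{E}}\mathcal{F}(e)$, and $cl_{eig}(K)=\bigcap\{F\in\mathcal{F}_{eig}:K\subseteq F\}$ for $K\subseteq\Sigma$. A closure operator $cl$ on $W$ satisfies $T_0$ iff $cl(\{w\})=cl(\{v\})$ implies $w=v$. *)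

theory Defs
  imports Main
begin

definition entity :: "'e set \<Rightarrow> 's set \<Rightarrow> 'x set \<Rightarrow> ('e \<Rightarrow> 's \<Rightarrow> 'x set) \<Rightarrow> bool" where
  "entity E Sig X Out \<longleftrightarrow> (\<forall>e\<in>E. \<forall>p\<in>Sig. Out e p \<noteq> {}) \<and> X = (\<Union>e\<in>E. \<Union>p\<in>Sig. Out e p)"

definition outcomes :: "'s set \<Rightarrow> ('e \<Rightarrow> 's \<Rightarrow> 'x set) \<Rightarrow> 'e \<Rightarrow> 'x set" where
  "outcomes Sig Out e = (\<Union>p\<in>Sig. Out e p)"

definition eig :: "'s set \<Rightarrow> ('e \<Rightarrow> 's \<Rightarrow> 'x set) \<Rightarrow> 'e \<Rightarrow> 'x set \<Rightarrow> 's set" where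
  "eig Sig Out e A = {p\<in>Sig. Out e p \<subseteq> A}"

definition eigF :: "'s set \<Rightarrow> ('e \<Rightarrow> 's \<Rightarrow> 'x set) \<Rightarrow> 'e \<Rightarrow> 's set set" where
  "eigF Sig Out e = {eig Sig Out e A | A. A \<subseteq> outcomes Sig Out e}"

text \<open>All intersections of families of elements of the union of the F(e);
  the empty family gives Sigma (intersection taken within Sigma).\<close>
definition F_eig :: "'e set \<Rightarrow> 's set \<Rightarrow> ('e \<Rightarrow> 's \<Rightarrow> 'x set) \<Rightarrow> 's set set" where
  "F_eig E Sig Out = {Sig \<inter> \<Inter>\<A> | \<A>. \<A> \<subseteq> (\<Union>e\<in>E. eigF Sig Out e)}"

definition cl_eig :: "'e set \<Rightarrow> 's set \<Rightarrow> ('e \<Rightarrow> 's \<Rightarrow> 'x set) \<Rightarrow> 's set \<Rightarrow> 's set" where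
  "cl_eig E Sig Out K = Sig \<inter> \<Inter>{F\<in>F_eig E Sig Out. K \<subseteq> F}"

definition T0 :: "'w set \<Rightarrow> ('w set \<Rightarrow> 'w set) \<Rightarrow> bool" where
  "T0 W cl \<longleftrightarrow> (\<forall>w\<in>W. \<forall>v\<in>W. cl {w} = cl {v} \<longrightarrow> w = v)"

definition state_determined :: "'e set \<Rightarrow> 's set \<Rightarrow> ('e \<Rightarrow> 's \<Rightarrow> 'x set) \<Rightarrow> bool" where
  "state_determined E Sig Out \<longleftrightarrow> (\<forall>p\<in>Sig. \<forall>q\<in>Sig. (\<forall>e\<in>E. Out e p = Out e q) \<longrightarrow> p = q)"

end

theory Submission
  imports Defs
begin

text \<open>The closure of a state p is the set of states r with Out e r \<subseteq> Out e p for every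
  experiment e: the eigen sets eig e (Out e p) are closed sets containing p, and every
  eigen set containing p also contains every such r. Hence cl {p} = cl {q} exactly when p
  and q have the same outcome sets, so T0 is state determination.\<close>

lemma eig_outcome_set_in_F_eig:
  assumes "p \<in> Sig" and "e \<in> E"
  shows "eig Sig Out e (Out e p) \<in> F_eig E Sig Out"
proof -
  have "Out e p \<subseteq> outcomes Sig Out e"
    using assms(1) by (auto simp: outcomes_def)
  then have "eig Sig Out e (Out e p) \<in> eigF Sig Out e"
    by (auto simp: eigF_def)
  moreover have "eig Sig Out e (Out e p) = Sig \<inter> \<Inter>{eig Sig Out e (Out e p)}"
    by (auto simp: eig_def)
  ultimately show ?thesis
    unfolding F_eig_def using assms(2) by blast
qed

lemma F_eig_closed_under_smaller_outcomes:
  assumes "F \<in> F_eig E Sig Out" and "p \<in> F" and "r \<in> Sig"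
    and "\<forall>e\<in>E. Out e r \<subseteq> Out e p"
  shows "r \<in> F"
proof -
  obtain \<A> where F: "F = Sig \<inter> \<Inter>\<A>" and \<A>: "\<A> \<subseteq> (\<Union>e\<in>E. eigF Sig Out e)"
    using assms(1) unfolding F_eig_def by blast
  have "r \<in> B" if "B \<in> \<A>" for B
  proof -
    obtain e C where "e \<in> E" and B: "B = eig Sig Out e C"
      using \<A> \<open>B \<in> \<A>\<close> unfolding eigF_def by blast
    moreover have "Out e p \<subseteq> C"
      using assms(2) F \<open>B \<in> \<A>\<close> B by (auto simp: eig_def)
    ultimately show ?thesis
      using assms(3,4) by (auto simp: eig_def)
  qed
  then show ?thesis
    using F assms(3) by blast
qed

lemma cl_eig_singleton:
  assumes "p \<in> Sig"
  shows "cl_eig E Sig Out {p} = {r\<in>Sig. \<forall>e\<in>E. Out e r \<subseteq> Out e p}"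
proof (intro equalityI subsetI)
  fix r
  assume r: "r \<in> cl_eig E Sig Out {p}"
  have "r \<in> eig Sig Out e (Out e p)" if "e \<in> E" for e
    using r eig_outcome_set_in_F_eig[OF assms that] assms
    unfolding cl_eig_def by (auto simp: eig_def)
  then show "r \<in> {r\<in>Sig. \<forall>e\<in>E. Out e r \<subseteq> Out e p}"
    using r by (auto simp: cl_eig_def eig_def)
next
  fix r
  assume r: "r \<in> {r\<in>Sig. \<forall>e\<in>E. Out e r \<subseteq> Out e p}"
  have "r \<in> F" if "F \<in> F_eig E Sig Out" and "{p} \<subseteq> F" for F
    using F_eig_closed_under_smaller_outcomes[OF that(1)] that(2) r by blast
  then show "r \<in> cl_eig E Sig Out {p}"
    using r unfolding cl_eig_def by blast
qed

lemma cl_eig_singleton_eq_iff: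
  assumes "p \<in> Sig" and "q \<in> Sig"
  shows "cl_eig E Sig Out {p} = cl_eig E Sig Out {q} \<longleftrightarrow> (\<forall>e\<in>E. Out e p = Out e q)"
  using assms unfolding cl_eig_singleton[OF assms(1)] cl_eig_singleton[OF assms(2)] by blast

theorem mainTheorem3:
  assumes "entity E Sig X Out"
  shows "state_determined E Sig Out \<longleftrightarrow> T0 Sig (cl_eig E Sig Out)"
  unfolding state_determined_def T0_def by (simp add: cl_eig_singleton_eq_iff)

end
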